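(* Let $i,p\ge-1$ and $q\ge0$, and let $v\in C([0,1],L(\mathbb{R}^d,\mathbb{R}^n))$, $w\in C([0,1],\mathbb{R}^d)$. Then \[ \Big\|\Delta_i\Big(\int_0^\cdot\Delta_pv(s)\,d\Delta_qw(s)\Big)\Big\|_\infty\lesssim 2^{-(i\vee p\vee q)-i+p+q}\|\Delta_pv\|_\infty\|\Delta_qw\|_\infty, \] except in the case $i=q>p$, where one only has \[ \Big\|\Delta_i\Big(\int_0^\cdot\Delta_pv(s)\,d\Delta_qw(s)\Big)\Big\|_\infty\lesssim\|\Delta_pv\|_\infty\|\Delta_qw\|_\infty. \]
   Context: Index set: pairs $(p,m)$ with either $p=-1,m=0$, or $p\in\mathbb{N}=\{0,1,2,\dots\}$ and $0\le m\le 2^p$. For $p\in\mathbb{N}$, $1\le m\le 2^p$ set $t^0_{pm}=(m-1)2^{-p}$, $t^1_{pm}=(2m-1)2^{-p-1}$, $t^2_{pm}=m2^{-p}$. Rescaled Haar functions: for $p\in\mathbb{N}$, $1\le m\le 2^p$, $\chi_{pm}=2^p$ on $[t^0_{pm},t^1_{pm})$, $=-2^p$ on $[t^1_{pm},t^2_{pm})$, $=0$ elsewhere; $\chi_{00}\equiv1$; $\chi_{p0}\equiv0$ for $p\ge1$. Rescaled Schauder functions: $\varphi_{pm}(t)=\int_0^t\chi_{pm}(s)\,ds$ for $p\in\mathbb{N}$, and $\varphi_{-10}\equiv1$. For continuous $f:[0,1]\to E$ ($E$ a finite-dimensional normed space), coefficients: $f_{-10}=f(0)$, $f_{00}=f(1)-f(0)$,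 $f_{p0}=0$ for $p\ge1$, $f_{pm}=2f(t^1_{pm})-f(t^0_{pm})-f(t^2_{pm})$ for $p\in\mathbb{N},m\ge1$. Schauder blocks: $\Delta_pf=\sum_{m=0}^{2^p}f_{pm}\varphi_{pm}$ for $p\ge-1$. Since $\Delta_qw$ is piecewise linear, $\int_0^t\Delta_pv\,d\Delta_qw:=\int_0^t\Delta_pv(s)(\Delta_qw)'(s)\,ds$. $\|\cdot\|_\infty$ is the sup norm on $[0,1]$; $a\vee b=\max(a,b)$; $\lesssim$ hides a constant independent of $i,p,q,v,w$. *)

theory Defs
  imports "HOL-Analysis.Analysis"
begin

text \<open>Dyadic points t^0_{pm}, t^1_{pm}, t^2_{pm} (for p in nat, 1 <= m <= 2^p).\<close>
definition tL :: "nat \<Rightarrow> nat \<Rightarrow> real" where "tL p m = (real m - 1) / 2 ^ p"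
definition tM :: "nat \<Rightarrow> nat \<Rightarrow> real" where "tM p m = (2 * real m - 1) / 2 ^ (p + 1)"
definition tR :: "nat \<Rightarrow> nat \<Rightarrow> real" where "tR p m = real m / 2 ^ p"

text \<open>Rescaled Haar functions chi_{pm}, p in nat, 0 <= m <= 2^p.\<close>
definition haar :: "nat \<Rightarrow> nat \<Rightarrow> real \<Rightarrow> real" where
  "haar p m t =
     (if m = 0 then (if p = 0 then 1 else 0)
      else if tL p m \<le> t \<and> t < tM p m then 2 ^ p
      else if tM p m \<le> t \<and> t < tR p m then - (2 ^ p)
      else 0)"

definition schauder :: "nat \<Rightarrow> nat \<Rightarrow> real \<Rightarrow> real" where
  "schauder p m t = integral {0..t} (haar p m)"

text \<open>Schauder coefficients f_{pm} for p in nat (the coefficient f_{-1,0} = f 0 is used directly).\<close>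
definition scoeff :: "(real \<Rightarrow> 'e::real_normed_vector) \<Rightarrow> nat \<Rightarrow> nat \<Rightarrow> 'e" where
  "scoeff f p m =
     (if m = 0 then (if p = 0 then f 1 - f 0 else 0)
      else 2 *\<^sub>R f (tM p m) - f (tL p m) - f (tR p m))"

text \<open>Schauder blocks Delta_p f for p >= -1 (p :: int); phi_{-1,0} = 1, f_{-1,0} = f 0.
  For p < -1 (not used) it is defined as 0.\<close>
definition sblock :: "int \<Rightarrow> (real \<Rightarrow> 'e::real_normed_vector) \<Rightarrow> real \<Rightarrow> 'e" where
  "sblock p f t =
     (if p = -1 then f 0
      else if p \<ge> 0 then (\<Sum>m\<in>{0..2 ^ nat p}. schauder (nat p) m t *\<^sub>R scoeff f (nat p) m)
      else 0)"

definition supnorm :: "(real \<Rightarrow> 'e::real_normed_vector) \<Rightarrow> real" where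
  "supnorm f = (SUP t\<in>{0..1}. norm (f t))"

definition block_integral ::
  "int \<Rightarrow> (real \<Rightarrow> ('a::real_normed_vector \<Rightarrow>\<^sub>L 'b::real_normed_vector)) \<Rightarrow> int \<Rightarrow> (real \<Rightarrow> 'a) \<Rightarrow> real \<Rightarrow> 'b" where
  "block_integral p v q w t =
     integral {0..t} (\<lambda>s. blinfun_apply (sblock p v s) (vector_derivative (sblock q w) (at s)))"

end

theory Submission
  imports Defs
begin

text \<open>
  The block \<open>\<Delta>\<^sub>q w\<close> is piecewise linear; its derivative \<open>H\<close> is constant on the dyadic cells
  of length \<open>2\<^sup>-\<^sup>q\<^sup>-\<^sup>1\<close> and of size \<open>\<lesssim> 2\<^sup>q \<parallel>\<Delta>\<^sub>q w\<parallel>\<close>, while \<open>\<Delta>\<^sub>p v\<close> is bounded by \<open>\<parallel>\<Delta>\<^sub>p v\<parallel>\<close>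
  and Lipschitz with constant \<open>\<lesssim> 2\<^sup>p \<parallel>\<Delta>\<^sub>p v\<parallel>\<close>. The Schauder coefficients of
  \<open>G = \<integral>\<^sub>0\<^sup>\<cdot> \<Delta>\<^sub>p v H\<close> on level \<open>i\<close> are differences of the integrals of \<open>\<Delta>\<^sub>p v H\<close> over the two
  halves of a dyadic interval of length \<open>2\<^sup>-\<^sup>i\<close>, and \<open>\<parallel>\<Delta>\<^sub>i G\<parallel> \<le> 2 max |G\<^sub>i\<^sub>m|\<close>.
  Three estimates of such a difference cover all cases. Trivially it is \<open>\<lesssim> 2\<^sup>q\<^sup>-\<^sup>i\<close>.
  If \<open>i > q\<close>, \<open>H\<close> is constant on the whole interval, so only the variation of \<open>\<Delta>\<^sub>p v\<close>
  over a shift by \<open>2\<^sup>-\<^sup>i\<^sup>-\<^sup>1\<close> enters, giving \<open>2\<^sup>p\<^sup>+\<^sup>q\<^sup>-\<^sup>2\<^sup>i\<close>. If \<open>i < q\<close>, \<open>H\<close> takes opposite values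
  on the two halves of each level-\<open>q\<close> interval, so each of these \<open>2\<^sup>q\<^sup>-\<^sup>i\<close> intervals
  contributes a second difference \<open>2\<^sup>p\<^sup>+\<^sup>q\<^sup>-\<^sup>2\<^sup>q\<close>, giving \<open>2\<^sup>p\<^sup>-\<^sup>i\<close>.
\<close>

lemma tL_less_tM: "tL p m < tM p m"
  by (simp add: tL_def tM_def divide_simps)

lemma tM_less_tR: "tM p m < tR p m"
  by (simp add: tR_def tM_def divide_simps)

lemma tM_minus_tL: "tM p m - tL p m = 1 / 2^(p+1)"
  and tR_minus_tM: "tR p m - tM p m = 1 / 2^(p+1)"
  by (simp_all add: tL_def tM_def tR_def divide_simps)

lemma tL_nonneg: "1 \<le> m \<Longrightarrow> 0 \<le> tL p m"
  by (simp add: tL_def)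

lemma dyadic_points_in_unit_interval:
  assumes "m \<in> {1..2^p}"
  shows "0 \<le> tL p m" "tL p m \<le> tM p m" "tM p m \<le> tR p m" "tR p m \<le> 1"
proof -
  have "real m \<le> 2^p"
    using assms by (metis atLeastAtMost_iff of_nat_le_iff of_nat_numeral of_nat_power)
  then show "tR p m \<le> 1" by (simp add: tR_def divide_simps)
  show "0 \<le> tL p m" using assms by (simp add: tL_def)
  show "tL p m \<le> tM p m" "tM p m \<le> tR p m"
    using tL_less_tM tM_less_tR less_imp_le by blast+
qed

lemma dyadic_points_as_fractions:
  "tL p m = of_int (2 * int m - 2) / 2^(p+1)"
  "tM p m = of_int (2 * int m - 1) / 2^(p+1)"
  "tR p m = of_int (2 * int m) / 2^(p+1)"
  by (simp_all add: tL_def tM_def tR_def divide_simps)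

lemma dyadic_interval_index:
  assumes "1 \<le> m" "tL p m \<le> t" "t < tR p m"
  shows "m = nat \<lfloor>t * 2^p\<rfloor> + 1"
proof -
  have "real m - 1 \<le> t * 2^p" "t * 2^p < real m"
    using assms(2,3) by (simp_all add: tL_def tR_def divide_simps)
  then have "\<lfloor>t * 2^p\<rfloor> = int m - 1"
    using assms(1) by (simp add: floor_eq_iff)
  then show ?thesis using assms(1) by simp
qed

lemma dyadic_le_iff_floor: "of_int j / 2^n \<le> (s::real) \<longleftrightarrow> j \<le> \<lfloor>s * 2^n\<rfloor>"
  by (simp add: pos_divide_le_eq le_floor_iff)

lemma sum_eq_single_nonzero:
  assumes "finite A" "\<And>m. m \<in> A \<Longrightarrow> m \<noteq> k \<Longrightarrow> f m = 0"
  shows "sum f A = (if k \<in> A then f k else 0)"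
proof -
  have "sum f A = (\<Sum>m\<in>A. if m = k then f k else 0)"
    using assms(2) by (intro sum.cong) auto
  then show ?thesis using assms(1) by simp
qed

lemma has_integral_const_on_atLeastLessThan:
  fixes a b t c :: real
  assumes "0 \<le> a"
  shows "((\<lambda>s. if s \<in> {a..<b} then c else 0) has_integral (max 0 (min b t - a) * c)) {0..t}"
proof -
  have "{a..b} \<inter> {0..t} = {a..min b t}" using assms by auto
  moreover have "((\<lambda>s. c) has_integral (max 0 (min b t - a) * c)) {a..min b t}"
    using has_integral_const_real[of c a "min b t"] by (simp add: max_def)
  ultimately have "((\<lambda>s. c) has_integral (max 0 (min b t - a) * c)) ({a..b} \<inter> {0..t})"
    by (simp only:)
  then have "((\<lambda>s. if s \<in> {a..b} then c else 0) has_integral (max 0 (min b t - a) * c)) {0..t}"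
    by (simp only: has_integral_restrict_Int)
  from has_integral_spike_finite[OF _ _ this, of "{b}"] show ?thesis by auto
qed

lemma haar_eq_0_outside: "1 \<le> m \<Longrightarrow> s < tL p m \<or> tR p m \<le> s \<Longrightarrow> haar p m s = 0"
  using tL_less_tM[of p m] tM_less_tR[of p m] by (auto simp: haar_def)

lemma abs_haar_le: "\<bar>haar p m s\<bar> \<le> 2^p"
  by (auto simp: haar_def)

lemma haar_eq_if_same_cell:
  assumes "\<lfloor>s * 2^(p+1)\<rfloor> = \<lfloor>s' * 2^(p+1)\<rfloor>"
  shows "haar p m s = haar p m s'"
proof -
  have "of_int j / 2^(p+1) \<le> s \<longleftrightarrow> of_int j / 2^(p+1) \<le> s'" for j
    using assms by (simp only: dyadic_le_iff_floor)
  then show ?thesis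
    unfolding haar_def dyadic_points_as_fractions by (simp only: not_le[symmetric])
qed

lemma haar_has_integral:
  assumes "1 \<le> m"
  shows "(haar p m has_integral
     2^p * (max 0 (min (tM p m) t - tL p m) - max 0 (min (tR p m) t - tM p m))) {0..t}"
proof -
  have nonneg: "0 \<le> tL p m" "0 \<le> tM p m"
    using tL_nonneg[OF assms, of p] tL_less_tM[of p m] by auto
  have "haar p m = (\<lambda>s. (if s \<in> {tL p m..<tM p m} then 2^p else 0)
                       + (if s \<in> {tM p m..<tR p m} then - (2^p) else 0))"
    using assms tL_less_tM[of p m] tM_less_tR[of p m] by (auto simp: haar_def)
  moreover have "((\<lambda>s. (if s \<in> {tL p m..<tM p m} then 2^p else 0)
                     + (if s \<in> {tM p m..<tR p m} then - (2^p) else 0)) has_integral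
      max 0 (min (tM p m) t - tL p m) * 2^p + max 0 (min (tR p m) t - tM p m) * - (2^p)) {0..t}"
    by (intro has_integral_add has_integral_const_on_atLeastLessThan nonneg)
  ultimately show ?thesis by (simp add: algebra_simps)
qed

lemma haar_index_0_has_integral:
  "(haar p 0 has_integral (if p = 0 then max 0 t else 0)) {0..t}"
proof (cases "p = 0")
  case True
  then have "haar p 0 = (\<lambda>s. 1)" by (auto simp: haar_def)
  then show ?thesis
    using True has_integral_const_real[of "1::real" 0 t] by (auto simp: max_def)
next
  case False
  then have "haar p 0 = (\<lambda>s. 0)" by (auto simp: haar_def)
  then show ?thesis using False by simp
qed

lemma haar_integrable: "haar p m integrable_on {0..t}"
  using haar_has_integral[of m p t] haar_index_0_has_integral[of p t]
  by (cases "m = 0") auto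

lemma schauder_eq: "1 \<le> m \<Longrightarrow> schauder p m t =
     2^p * (max 0 (min (tM p m) t - tL p m) - max 0 (min (tR p m) t - tM p m))"
  unfolding schauder_def by (rule integral_unique[OF haar_has_integral])

lemma schauder_index_0: "schauder p 0 t = (if p = 0 then max 0 t else 0)"
  unfolding schauder_def by (rule integral_unique[OF haar_index_0_has_integral])

lemma schauder_eq_0_outside: "1 \<le> m \<Longrightarrow> t \<le> tL p m \<or> tR p m \<le> t \<Longrightarrow> schauder p m t = 0"
  using tL_less_tM[of p m] tM_less_tR[of p m] tM_minus_tL[of p m] tR_minus_tM[of p m]
  by (auto simp: schauder_eq max_def min_def)

lemma schauder_tM: "1 \<le> m \<Longrightarrow> schauder p m (tM p m) = 1/2"
  using tL_less_tM[of p m] tM_less_tR[of p m] tM_minus_tL[of p m]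
  by (simp add: schauder_eq max_def)

lemma abs_schauder_le_half:
  assumes "1 \<le> m"
  shows "\<bar>schauder p m t\<bar> \<le> 1/2"
proof -
  define x where "x = max 0 (min (tM p m) t - tL p m) - max 0 (min (tR p m) t - tM p m)"
  have "0 \<le> x" "x \<le> 1 / 2^(p+1)"
    using tL_less_tM[of p m] tM_less_tR[of p m] tM_minus_tL[of p m] tR_minus_tM[of p m]
    by (auto simp: x_def max_def min_def)
  then have "0 \<le> 2^p * x" "2^p * x \<le> (2::real)^p * (1 / 2^(p+1))"
    by (simp_all only: mult_left_mono zero_le_power zero_le_numeral mult_nonneg_nonneg)
  then show ?thesis
    using schauder_eq[OF assms, of p t] by (simp add: x_def)
qed

text \<open>\<open>haar_block p f = \<Sum>\<^sub>m \<chi>\<^sub>p\<^sub>m f\<^sub>p\<^sub>m\<close> is the derivative of \<open>\<Delta>\<^sub>p f\<close> off the dyadic grid.\<close>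

definition haar_block :: "nat \<Rightarrow> (real \<Rightarrow> 'e::real_normed_vector) \<Rightarrow> real \<Rightarrow> 'e" where
  "haar_block p f s = (\<Sum>m\<in>{0..2^p}. haar p m s *\<^sub>R scoeff f p m)"

lemma sblock_of_nat: "sblock (int p) f t = (\<Sum>m\<in>{0..2^p}. schauder p m t *\<^sub>R scoeff f p m)"
  by (simp add: sblock_def)

lemma scoeff_index_0: "1 \<le> p \<Longrightarrow> scoeff f p 0 = 0"
  by (simp add: scoeff_def)

lemma sblock_level_0:
  "sblock 0 f t = schauder 0 0 t *\<^sub>R scoeff f 0 0 + schauder 0 1 t *\<^sub>R scoeff f 0 1"
proof -
  have "{0..1::nat} = {0, 1}" by auto
  then show ?thesis using sblock_of_nat[of 0 f t] by simp
qed

lemma haar_block_level_0: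
  "haar_block 0 f s = haar 0 0 s *\<^sub>R scoeff f 0 0 + haar 0 1 s *\<^sub>R scoeff f 0 1"
proof -
  have "{0..1::nat} = {0, 1}" by auto
  then show ?thesis by (simp add: haar_block_def)
qed

lemma sblock_single_term:
  assumes "1 \<le> p"
  shows "sblock (int p) f t =
    (if nat \<lfloor>t * 2^p\<rfloor> + 1 \<le> 2^p
     then schauder p (nat \<lfloor>t * 2^p\<rfloor> + 1) t *\<^sub>R scoeff f p (nat \<lfloor>t * 2^p\<rfloor> + 1) else 0)"
  unfolding sblock_of_nat
proof (subst sum_eq_single_nonzero)
  fix m assume m: "m \<in> {0..2^p}" "m \<noteq> nat \<lfloor>t * 2^p\<rfloor> + 1"
  show "schauder p m t *\<^sub>R scoeff f p m = 0"
  proof (cases "m = 0")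
    case False
    then have "t \<le> tL p m \<or> tR p m \<le> t"
      using dyadic_interval_index[of m p t] m by force
    then show ?thesis using schauder_eq_0_outside[of m] False by simp
  qed (simp add: scoeff_index_0[OF assms])
qed auto

lemma haar_block_single_term:
  assumes "1 \<le> p"
  shows "haar_block p f s =
    (if nat \<lfloor>s * 2^p\<rfloor> + 1 \<le> 2^p
     then haar p (nat \<lfloor>s * 2^p\<rfloor> + 1) s *\<^sub>R scoeff f p (nat \<lfloor>s * 2^p\<rfloor> + 1) else 0)"
  unfolding haar_block_def
proof (subst sum_eq_single_nonzero)
  fix m assume m: "m \<in> {0..2^p}" "m \<noteq> nat \<lfloor>s * 2^p\<rfloor> + 1"
  show "haar p m s *\<^sub>R scoeff f p m = 0"
  proof (cases "m = 0")
    case False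
    then have "s < tL p m \<or> tR p m \<le> s"
      using dyadic_interval_index[of m p s] m by force
    then show ?thesis using haar_eq_0_outside[of m] False by simp
  qed (simp add: scoeff_index_0[OF assms])
qed auto

lemma haar_block_on_dyadic_interval:
  assumes "1 \<le> p" "k \<in> {1..2^p}"
  shows "tL p k \<le> s \<Longrightarrow> s < tM p k \<Longrightarrow> haar_block p f s = 2^p *\<^sub>R scoeff f p k"
    and "tM p k \<le> s \<Longrightarrow> s < tR p k \<Longrightarrow> haar_block p f s = - (2^p *\<^sub>R scoeff f p k)"
  using assms dyadic_interval_index[of k p s] tL_less_tM[of p k] tM_less_tR[of p k]
  by (auto simp: haar_block_single_term haar_def)

lemma sblock_tM:
  assumes "1 \<le> p" "k \<in> {1..2^p}"
  shows "sblock (int p) f (tM p k) = (1/2) *\<^sub>R scoeff f p k"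
  using assms dyadic_interval_index[of k p "tM p k"] tL_less_tM[of p k] tM_less_tR[of p k]
  by (auto simp: sblock_single_term schauder_tM)

lemma haar_block_has_integral: "(haar_block p f has_integral sblock (int p) f t) {0..t}"
  unfolding haar_block_def sblock_of_nat schauder_def
  by (intro has_integral_sum has_integral_scaleR_left integrable_integral haar_integrable) auto

lemma sblock_eq_integral: "sblock (int p) f t = integral {0..t} (haar_block p f)"
  using haar_block_has_integral by (metis integral_unique)

lemma sblock_diff_has_integral:
  fixes f :: "real \<Rightarrow> 'e::banach"
  assumes "0 \<le> a" "a \<le> b"
  shows "(haar_block p f has_integral (sblock (int p) f b - sblock (int p) f a)) {a..b}"
proof -
  have int_0b: "haar_block p f integrable_on {0..b}"
    using has_integral_integrable[OF haar_block_has_integral] .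
  have "haar_block p f integrable_on {a..b}"
    by (rule integrable_subinterval_real[OF int_0b]) (use assms in simp)
  moreover have "integral {0..a} (haar_block p f) + integral {a..b} (haar_block p f)
      = integral {0..b} (haar_block p f)"
    using assms int_0b by (intro Henstock_Kurzweil_Integration.integral_combine) simp_all
  then have "sblock (int p) f b - sblock (int p) f a = integral {a..b} (haar_block p f)"
    unfolding sblock_eq_integral by (metis add_diff_cancel_left')
  ultimately show ?thesis
    using integrable_integral by metis
qed

lemma norm_scoeff_level_0_le:
  assumes "\<And>t. t \<in> {0..1} \<Longrightarrow> norm (sblock 0 f t) \<le> B"
  shows "norm (scoeff f 0 0) \<le> B" "norm (scoeff f 0 1) \<le> 3 * B"
proof -
  have "schauder 0 1 1 = 0" "schauder 0 1 (1/2) = 1/2"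
    using schauder_eq_0_outside[of 1 1 0] schauder_tM[of 1 0] by (simp_all add: tR_def tM_def)
  then have at_1: "sblock 0 f 1 = scoeff f 0 0"
    and at_half: "scoeff f 0 1 = 2 *\<^sub>R sblock 0 f (1/2) - scoeff f 0 0"
    by (simp_all add: sblock_level_0 schauder_index_0 algebra_simps)
  show "norm (scoeff f 0 0) \<le> B" using assms[of 1] by (simp add: at_1)
  moreover have "norm (scoeff f 0 1) \<le> norm (2 *\<^sub>R sblock 0 f (1/2)) + norm (scoeff f 0 0)"
    unfolding at_half by (rule norm_triangle_ineq4)
  ultimately show "norm (scoeff f 0 1) \<le> 3 * B"
    using assms[of "1/2"] by simp
qed

lemma norm_scoeff_le:
  assumes "\<And>t. t \<in> {0..1} \<Longrightarrow> norm (sblock (int p) f t) \<le> B" "1 \<le> p" "m \<in> {1..2^p}"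
  shows "norm (scoeff f p m) \<le> 2 * B"
  using assms(1)[of "tM p m"] dyadic_points_in_unit_interval[OF assms(3)]
  by (simp add: sblock_tM[OF assms(2,3)])

lemma bound_nonneg_if_bounds_sblock:
  assumes "\<And>t. t \<in> {0..1} \<Longrightarrow> norm (sblock p f t) \<le> B"
  shows "0 \<le> B"
  using assms[of 0] by (simp add: order_trans[OF norm_ge_zero])

lemma norm_haar_block_le:
  assumes B: "\<And>t. t \<in> {0..1} \<Longrightarrow> norm (sblock (int p) f t) \<le> B"
  shows "norm (haar_block p f s) \<le> 4 * 2^p * B"
proof (cases "p = 0")
  case True
  have "norm (haar_block 0 f s) \<le> \<bar>haar 0 0 s\<bar> * norm (scoeff f 0 0) + \<bar>haar 0 1 s\<bar> * norm (scoeff f 0 1)"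
    unfolding haar_block_level_0 by (rule order_trans[OF norm_triangle_ineq]) simp
  also have "\<dots> \<le> 1 * B + 1 * (3 * B)"
    using abs_haar_le[of 0 0 s] abs_haar_le[of 0 1 s] norm_scoeff_level_0_le[of f B] B True
    by (intro add_mono mult_mono) auto
  finally show ?thesis using True by simp
next
  case False
  define k where "k = nat \<lfloor>s * 2^p\<rfloor> + 1"
  have B0: "0 \<le> B" using bound_nonneg_if_bounds_sblock[OF B] .
  have "haar_block p f s = (if k \<le> 2^p then haar p k s *\<^sub>R scoeff f p k else 0)"
    unfolding k_def using False by (simp add: haar_block_single_term)
  moreover have "norm (haar p k s *\<^sub>R scoeff f p k) \<le> 2^p * (2 * B)" if "k \<le> 2^p"
  proof -
    have "norm (scoeff f p k) \<le> 2 * B"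
      using norm_scoeff_le[OF B, of k] False that by (simp add: k_def)
    then show ?thesis
      unfolding norm_scaleR using abs_haar_le[of p k s] by (intro mult_mono) simp_all
  qed
  ultimately have "norm (haar_block p f s) \<le> 2^p * (2 * B)"
    using B0 by simp
  moreover have "0 \<le> 2^p * B" using B0 by simp
  ultimately show ?thesis by linarith
qed

lemma norm_sblock_diff_le:
  fixes f :: "real \<Rightarrow> 'e::banach"
  assumes B: "\<And>t. t \<in> {0..1} \<Longrightarrow> norm (sblock (int p) f t) \<le> B"
    and "0 \<le> a" "a \<le> b"
  shows "norm (sblock (int p) f b - sblock (int p) f a) \<le> 4 * 2^p * B * (b - a)"
proof -
  have "(haar_block p f has_integral (sblock (int p) f b - sblock (int p) f a)) (cbox a b)"
    using sblock_diff_has_integral[OF assms(2,3)] by simp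
  then have "norm (sblock (int p) f b - sblock (int p) f a) \<le> (4 * 2^p * B) * measure lborel (cbox a b)"
    by (rule has_integral_bound[rotated])
      (use norm_haar_block_le[OF B] bound_nonneg_if_bounds_sblock[OF B] in simp_all)
  then show ?thesis using assms(3) by simp
qed

lemma haar_block_eq_if_same_cell:
  assumes "\<lfloor>s * 2^(p+1)\<rfloor> = \<lfloor>s' * 2^(p+1)\<rfloor>"
  shows "haar_block p f s = haar_block p f s'"
  using haar_eq_if_same_cell[OF assms] by (simp add: haar_block_def)

lemma sblock_has_vector_derivative:
  fixes f :: "real \<Rightarrow> 'e::banach"
  assumes "0 < s" and non_dyadic: "s * 2^(p+1) \<notin> \<int>"
  shows "(sblock (int p) f has_vector_derivative haar_block p f s) (at s)"
proof -
  define N :: real where "N = 2^(p+1)"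
  define U where "U = {of_int \<lfloor>s * N\<rfloor> / N <..< (of_int \<lfloor>s * N\<rfloor> + 1) / N}"
  have "of_int \<lfloor>s * N\<rfloor> \<noteq> s * N"
    using non_dyadic unfolding N_def by (metis Ints_of_int)
  then have "of_int \<lfloor>s * N\<rfloor> < s * N" "s * N < of_int \<lfloor>s * N\<rfloor> + 1"
    using of_int_floor_le[of "s * N"] by linarith+
  then have "s \<in> U"
    unfolding U_def by (simp add: N_def field_simps)
  have "haar_block p f y = haar_block p f s" if "y \<in> U" for y
  proof (rule haar_block_eq_if_same_cell)
    have "of_int \<lfloor>s * N\<rfloor> < y * N" "y * N < of_int \<lfloor>s * N\<rfloor> + 1"
      using that by (auto simp: U_def N_def field_simps)
    then show "\<lfloor>y * 2^(p+1)\<rfloor> = \<lfloor>s * 2^(p+1)\<rfloor>"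
      unfolding N_def[symmetric] by (simp add: floor_eq_iff)
  qed
  then have "continuous_on U (haar_block p f)"
    by (intro continuous_on_eq[OF continuous_on_const]) simp
  then have "isCont (haar_block p f) s"
    using \<open>s \<in> U\<close> by (simp add: U_def continuous_on_eq_continuous_at)
  then have "continuous (at s within {0..s+1} - {}) (haar_block p f)"
    by (rule continuous_at_imp_continuous_within)
  then have "((\<lambda>u. integral {0..u} (haar_block p f)) has_vector_derivative haar_block p f s)
      (at s within {0..s+1} - {})"
    using \<open>0 < s\<close> has_integral_integrable[OF haar_block_has_integral]
    by (intro integral_has_vector_derivative_continuous_at) simp_all
  moreover have "sblock (int p) f = (\<lambda>u. integral {0..u} (haar_block p f))"
    by (rule ext) (rule sblock_eq_integral)
  moreover have "at s within {0..s+1} - {} = at s"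
    using \<open>0 < s\<close> by (simp add: at_within_Icc_at)
  ultimately show ?thesis by simp
qed

lemma dyadic_points_negligible: "negligible (range (\<lambda>j::int. of_int j / (2::real)^n))"
proof -
  have "range (\<lambda>j::int. of_int j / (2::real)^n) = \<Union> ((\<lambda>j. {of_int j / 2^n}) ` UNIV)"
    by auto
  then show ?thesis
    by (simp only:) (rule negligible_countable_Union; auto intro: countableI_type)
qed

lemma block_integral_eq_integral_haar_block:
  fixes w :: "real \<Rightarrow> 'a::banach"
  shows "block_integral p v (int q) w t = integral {0..t} (\<lambda>s. sblock p v s (haar_block q w s))"
  unfolding block_integral_def
proof (rule integral_spike[OF dyadic_points_negligible[of "q+1"]])
  fix s assume s: "s \<in> {0..t} - range (\<lambda>j::int. of_int j / 2^(q+1))"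
  have "(0::real) \<in> range (\<lambda>j::int. of_int j / 2^(q+1))"
    by (rule range_eqI[of _ _ 0]) simp
  then have "0 < s" using s by force
  moreover have "s * 2^(q+1) \<notin> \<int>"
  proof
    assume "s * 2^(q+1) \<in> \<int>"
    then obtain j where "s * 2^(q+1) = of_int j" by (auto elim: Ints_cases)
    then have "s = of_int j / 2^(q+1)" by (simp add: field_simps)
    then show False using s by auto
  qed
  ultimately have "vector_derivative (sblock (int q) w) (at s) = haar_block q w s"
    by (intro vector_derivative_at sblock_has_vector_derivative)
  then show "sblock p v s (haar_block q w s) = sblock p v s (vector_derivative (sblock (int q) w) (at s))"
    by simp
qed
lemma supnorm_least: "(\<And>t. t \<in> {0..1} \<Longrightarrow> norm (f t) \<le> B) \<Longrightarrow> supnorm f \<le> B"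
  unfolding supnorm_def by (rule cSUP_least) auto

lemma norm_le_supnorm:
  assumes "\<And>t. t \<in> {0..1} \<Longrightarrow> norm (f t) \<le> B" "t \<in> {0..1}"
  shows "norm (f t) \<le> supnorm f"
  unfolding supnorm_def by (rule cSUP_upper) (use assms in \<open>auto intro!: bdd_aboveI2[where M=B]\<close>)

lemma int_ge_minus_one_cases:
  fixes p :: int
  assumes "p \<ge> -1"
  obtains "p = -1" | n where "p = int n"
proof (cases "p = -1")
  case False
  then have "p = int (nat p)" using assms by simp
  then show ?thesis by (rule that(2))
qed (rule that(1))

lemma sblock_bounded:
  assumes "p \<ge> -1"
  shows "\<exists>B. \<forall>t\<in>{0..1}. norm (sblock p f t) \<le> B"
  using assms
proof (cases rule: int_ge_minus_one_cases)
  case 1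
  then show ?thesis by (auto simp: sblock_def)
next
  case (2 n)
  have "norm (sblock (int n) f t) \<le> (\<Sum>m\<in>{0..2^n}. norm (scoeff f n m))" if "t \<in> {0..1}" for t
  proof -
    have "\<bar>schauder n m t\<bar> \<le> 1" for m
      using that abs_schauder_le_half[of m n t] by (cases "m = 0") (auto simp: schauder_index_0)
    then have "norm (schauder n m t *\<^sub>R scoeff f n m) \<le> norm (scoeff f n m)" for m
      by (simp add: mult_left_le_one_le)
    then show ?thesis
      unfolding sblock_of_nat by (rule order_trans[OF norm_sum sum_mono])
  qed
  then show ?thesis using 2 by blast
qed

lemma norm_sblock_le_supnorm:
  "p \<ge> -1 \<Longrightarrow> t \<in> {0..1} \<Longrightarrow> norm (sblock p f t) \<le> supnorm (sblock p f)"
  using sblock_bounded[of p f] norm_le_supnorm by metis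

lemma supnorm_sblock_nonneg: "p \<ge> -1 \<Longrightarrow> 0 \<le> supnorm (sblock p f)"
  using norm_sblock_le_supnorm[of p 0 f] by (simp add: order_trans[OF norm_ge_zero])

lemma norm_sblock_diff_le_supnorm:
  fixes f :: "real \<Rightarrow> 'e::banach"
  assumes "p \<ge> -1" "0 \<le> a" "a \<le> b"
  shows "norm (sblock p f b - sblock p f a) \<le> 4 * 2 powr p * supnorm (sblock p f) * (b - a)"
  using assms(1)
proof (cases rule: int_ge_minus_one_cases)
  case 1
  then show ?thesis
    using supnorm_sblock_nonneg[OF assms(1), of f] assms(3) by (simp add: sblock_def)
next
  case (2 n)
  then show ?thesis
    using norm_sblock_diff_le[OF norm_sblock_le_supnorm assms(2,3), of n f] assms(1)
    by (simp add: powr_realpow)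
qed

lemma supnorm_sblock_le_scoeff:
  assumes B: "\<And>m. m \<in> {0..2^p} \<Longrightarrow> norm (scoeff f p m) \<le> B"
  shows "supnorm (sblock (int p) f) \<le> 2 * B"
proof (rule supnorm_least)
  have B0: "0 \<le> B" using B[of 0] by (simp add: order_trans[OF norm_ge_zero])
  fix t :: real assume t: "t \<in> {0..1}"
  show "norm (sblock (int p) f t) \<le> 2 * B"
  proof (cases "p = 0")
    case True
    have "norm (sblock 0 f t) \<le> \<bar>schauder 0 0 t\<bar> * norm (scoeff f 0 0) + \<bar>schauder 0 1 t\<bar> * norm (scoeff f 0 1)"
      unfolding sblock_level_0 by (rule order_trans[OF norm_triangle_ineq]) simp
    also have "\<dots> \<le> 1 * B + (1/2) * B"
      using t B[of 0] B[of 1] True abs_schauder_le_half[of 1 0 t] B0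
      by (intro add_mono mult_mono) (auto simp: schauder_index_0)
    finally show ?thesis using True B0 by simp
  next
    case False
    define k where "k = nat \<lfloor>t * 2^p\<rfloor> + 1"
    have "sblock (int p) f t = (if k \<le> 2^p then schauder p k t *\<^sub>R scoeff f p k else 0)"
      unfolding k_def using False by (simp add: sblock_single_term)
    moreover have "norm (schauder p k t *\<^sub>R scoeff f p k) \<le> (1/2) * B" if "k \<le> 2^p"
      unfolding norm_scaleR using abs_schauder_le_half[of k p t] B[of k] that B0
      by (intro mult_mono) (simp_all add: k_def)
    ultimately show ?thesis using B0 by auto
  qed
qed

lemma scoeff_cong:
  assumes "\<And>t. t \<in> {0..1} \<Longrightarrow> f t = g t" "m \<in> {0..2^p}"
  shows "scoeff f p m = scoeff g p m"
proof (cases "m = 0")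
  case False
  then have "m \<in> {1..2^p}" using assms(2) by auto
  then show ?thesis
    using dyadic_points_in_unit_interval[of m p] assms(1) by (auto simp: scoeff_def)
qed (use assms(1) in \<open>simp add: scoeff_def\<close>)

lemma norm_second_difference_integral_le:
  fixes \<phi> :: "real \<Rightarrow> 'b::banach"
  assumes cont: "continuous_on {a..a+2*h} \<phi>" and "0 \<le> h"
    and L: "\<And>x. x \<in> {a..a+h} \<Longrightarrow> norm (\<phi> x - \<phi> (x+h)) \<le> L * h"
  shows "norm (integral {a..a+h} \<phi> - integral {a+h..a+2*h} \<phi>) \<le> L * h * h"
proof -
  have "integral {a+h..a+2*h} \<phi> = integral {(a+h)-h..(a+2*h)-h} (\<lambda>x. \<phi> (x+h))"
    by (rule integral_shift_real_ivl[symmetric])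
  then have shift: "integral {a+h..a+2*h} \<phi> = integral {a..a+h} (\<lambda>x. \<phi> (x+h))"
    by (simp add: add.commute)
  have cont1: "continuous_on {a..a+h} \<phi>"
    by (rule continuous_on_subset[OF cont]) (use \<open>0 \<le> h\<close> in auto)
  have cont2: "continuous_on {a..a+h} (\<lambda>x. \<phi> (x+h))"
    by (rule continuous_on_compose2[OF cont]) (use \<open>0 \<le> h\<close> in \<open>auto intro: continuous_intros\<close>)
  have "integral {a..a+h} \<phi> - integral {a+h..a+2*h} \<phi> = integral {a..a+h} (\<lambda>x. \<phi> x - \<phi> (x+h))"
    unfolding shift using cont1 cont2 by (intro integral_diff[symmetric] integrable_continuous_real)
  moreover have "norm (integral (cbox a (a+h)) (\<lambda>x. \<phi> x - \<phi> (x+h))) \<le> (L * h) * measure lborel (cbox a (a+h))"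
  proof (rule has_integral_bound)
    show "0 \<le> L * h" using L[of a] \<open>0 \<le> h\<close> by (simp add: order_trans[OF norm_ge_zero])
    show "((\<lambda>x. \<phi> x - \<phi> (x+h)) has_integral integral (cbox a (a+h)) (\<lambda>x. \<phi> x - \<phi> (x+h))) (cbox a (a+h))"
      using cont1 cont2 by (simp add: integrable_integral integrable_continuous_real integrable_diff)
  qed (use L in simp)
  ultimately show ?thesis using \<open>0 \<le> h\<close> by simp
qed

lemma dyadic_interval_within_cell:
  assumes "q < n" "m \<in> {1..2^n}"
  obtains j :: nat where "real j / 2^(q+1) \<le> tL n m" "tR n m \<le> (real j + 1) / 2^(q+1)"
proof -
  define d where "d = n - q - 1"
  have n_eq: "n = q + 1 + d" using assms(1) by (simp add: d_def)
  define j where "j = (m - 1) div 2^d"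
  have "m - 1 = j * 2^d + (m - 1) mod 2^d"
    unfolding j_def by (rule div_mult_mod_eq[symmetric])
  moreover have "(m - 1) mod 2^d < 2^d" by simp
  moreover have "(j + 1) * 2^d = j * 2^d + 2^d" by simp
  ultimately have "j * 2^d \<le> m - 1" "m - 1 < (j + 1) * 2^d"
    by linarith+
  then have "real (j * 2^d) \<le> real (m - 1)" "real m \<le> real ((j + 1) * 2^d)"
    by (simp_all only: of_nat_le_iff)
  then have "real j * 2^d \<le> real m - 1" "real m \<le> (real j + 1) * 2^d"
    using assms(2) by (simp_all add: of_nat_diff algebra_simps)
  then have "real j * 2^d / 2^n \<le> (real m - 1) / 2^n" "real m / 2^n \<le> (real j + 1) * 2^d / 2^n"
    by (simp_all add: divide_right_mono)
  then show ?thesis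
    by (intro that) (simp_all add: tL_def tR_def n_eq power_add)
qed

text \<open>
  \<open>V\<close> stands for \<open>\<Delta>\<^sub>p v\<close> and \<open>H\<close> for the derivative of \<open>\<Delta>\<^sub>q w\<close>, which is constant on the
  cells \<open>[j 2\<^sup>-\<^sup>q\<^sup>-\<^sup>1, (j+1) 2\<^sup>-\<^sup>q\<^sup>-\<^sup>1)\<close>.
\<close>

locale dyadic_integrand =
  fixes V :: "real \<Rightarrow> ('a::real_normed_vector \<Rightarrow>\<^sub>L 'b::banach)" and H :: "real \<Rightarrow> 'a"
    and q :: nat and LV BV BH :: real
  assumes V_lipschitz: "\<And>a b. 0 \<le> a \<Longrightarrow> a \<le> b \<Longrightarrow> b \<le> 1 \<Longrightarrow> norm (V b - V a) \<le> LV * (b - a)"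
    and LV_nonneg: "0 \<le> LV"
    and V_bounded: "\<And>t. t \<in> {0..1} \<Longrightarrow> norm (V t) \<le> BV"
    and H_bounded: "\<And>s. norm (H s) \<le> BH"
    and H_eq_if_same_cell: "\<And>s s'. \<lfloor>s * 2^(q+1)\<rfloor> = \<lfloor>s' * 2^(q+1)\<rfloor> \<Longrightarrow> H s = H s'"
begin

definition integrand :: "real \<Rightarrow> 'b" where
  "integrand s = V s (H s)"

definition primitive :: "real \<Rightarrow> 'b" where
  "primitive t = integral {0..t} integrand"

lemma BV_nonneg: "0 \<le> BV"
  using V_bounded[of 0] by (simp add: order_trans[OF norm_ge_zero])

lemma BH_nonneg: "0 \<le> BH"
  using H_bounded[of 0] by (simp add: order_trans[OF norm_ge_zero])

lemma continuous_on_V_apply: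
  assumes "S \<subseteq> {0..1}"
  shows "continuous_on S (\<lambda>s. V s c)"
proof -
  have "LV-lipschitz_on {0..1} V"
    using V_lipschitz LV_nonneg by (intro lipschitz_on_leI) (auto simp: dist_norm norm_minus_commute)
  then have "continuous_on S V"
    using assms continuous_on_subset lipschitz_on_continuous_on by blast
  then show ?thesis by (intro continuous_intros)
qed

lemma norm_V_apply_diff_le:
  assumes "0 \<le> a" "a \<le> b" "b \<le> 1"
  shows "norm (V b c - V a c) \<le> LV * norm c * (b - a)"
proof -
  have "norm (V b c - V a c) \<le> norm (V b - V a) * norm c"
    unfolding blinfun.diff_left[symmetric] by (rule norm_blinfun)
  also have "\<dots> \<le> LV * (b - a) * norm c"
    using V_lipschitz[OF assms] by (intro mult_right_mono) auto
  finally show ?thesis by (simp add: algebra_simps)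
qed

lemma norm_second_difference_V_apply_le:
  assumes "0 \<le> a" "a + 2*h \<le> 1" "0 \<le> h"
  shows "norm (integral {a..a+h} (\<lambda>s. V s c) - integral {a+h..a+2*h} (\<lambda>s. V s c))
    \<le> LV * norm c * h * h"
proof (rule norm_second_difference_integral_le)
  show "continuous_on {a..a+2*h} (\<lambda>s. V s c)"
    using assms by (intro continuous_on_V_apply) auto
  show "norm (V x c - V (x + h) c) \<le> LV * norm c * h" if "x \<in> {a..a+h}" for x
    using norm_V_apply_diff_le[of x "x + h" c] that assms by (simp add: norm_minus_commute)
qed fact

lemma H_eq_on_cell:
  assumes "real j / 2^(q+1) \<le> s" "s < (real j + 1) / 2^(q+1)"
  shows "H s = H (real j / 2^(q+1))"
proof (rule H_eq_if_same_cell)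
  show "\<lfloor>s * 2^(q+1)\<rfloor> = \<lfloor>real j / 2^(q+1) * 2^(q+1)\<rfloor>"
    using assms by (simp add: floor_eq_iff field_simps)
qed

lemma integrand_has_integral_if_H_const:
  assumes "0 \<le> a" "b \<le> 1" "\<And>s. a \<le> s \<Longrightarrow> s < b \<Longrightarrow> H s = c"
  shows "(integrand has_integral integral {a..b} (\<lambda>s. V s c)) {a..b}"
proof -
  have "((\<lambda>s. V s c) has_integral integral {a..b} (\<lambda>s. V s c)) {a..b}"
    using assms by (intro integrable_integral integrable_continuous_real continuous_on_V_apply) auto
  from has_integral_spike_finite[OF _ _ this, of "{b}"] show ?thesis
    using assms(3) by (auto simp: integrand_def)
qed

lemma integrand_integrable: "integrand integrable_on {0..1}"
proof -
  have "integrand integrable_on {0..real k / 2^(q+1)}" if "k \<le> 2^(q+1)" for k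
    using that
  proof (induction k)
    case 0
    then show ?case using integrable_on_refl[of integrand 0] by simp
  next
    case (Suc k)
    have "real (Suc k) \<le> 2^(q+1)"
      using Suc.prems by (metis of_nat_le_iff of_nat_numeral of_nat_power)
    then have "(real k + 1) / 2^(q+1) \<le> 1"
      by (simp add: divide_simps)
    then have cell: "integrand integrable_on {real k / 2^(q+1)..(real k + 1) / 2^(q+1)}"
      by (intro has_integral_integrable[OF integrand_has_integral_if_H_const]) (simp_all add: H_eq_on_cell)
    have "integrand integrable_on {0..real k / 2^(q+1)}"
      using Suc by simp
    then have "integrand integrable_on {0..(real k + 1) / 2^(q+1)}"
      by (rule Henstock_Kurzweil_Integration.integrable_combine[rotated 2, OF _ cell])
        (simp_all add: divide_simps)
    then show ?case by (simp add: add.commute)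
  qed
  from this[of "2^(q+1)"] show ?thesis by simp
qed

lemma integrand_integrable_on: "0 \<le> a \<Longrightarrow> b \<le> 1 \<Longrightarrow> integrand integrable_on {a..b}"
  by (rule integrable_subinterval_real[OF integrand_integrable]) auto

lemma integral_integrand_combine:
  "0 \<le> a \<Longrightarrow> a \<le> b \<Longrightarrow> b \<le> c \<Longrightarrow> c \<le> 1 \<Longrightarrow>
    integral {a..b} integrand + integral {b..c} integrand = integral {a..c} integrand"
  by (rule Henstock_Kurzweil_Integration.integral_combine) (auto intro: integrand_integrable_on)

lemma norm_integral_integrand_le:
  assumes "0 \<le> a" "a \<le> b" "b \<le> 1"
  shows "norm (integral {a..b} integrand) \<le> BV * BH * (b - a)"
proof -
  have "(integrand has_integral integral {a..b} integrand) (cbox a b)"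
    using integrand_integrable_on[of a b] assms by (simp add: integrable_integral)
  then have "norm (integral {a..b} integrand) \<le> (BV * BH) * measure lborel (cbox a b)"
  proof (rule has_integral_bound[rotated])
    fix s assume "s \<in> cbox a b"
    then have "norm (V s) * norm (H s) \<le> BV * BH"
      using assms V_bounded[of s] H_bounded[of s] BV_nonneg by (intro mult_mono) auto
    then show "norm (integrand s) \<le> BV * BH"
      unfolding integrand_def using norm_blinfun order_trans by blast
  qed (use BV_nonneg BH_nonneg in simp)
  then show ?thesis using assms by simp
qed

lemma norm_second_difference_integrand_le:
  assumes "0 \<le> a" "a + 2*h \<le> 1" "0 < h"
    and H_const: "\<And>s. a \<le> s \<Longrightarrow> s < a + 2*h \<Longrightarrow> H s = c"
  shows "norm (integral {a..a+h} integrand - integral {a+h..a+2*h} integrand) \<le> LV * BH * h * h"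
proof -
  have "integral {a..a+h} integrand = integral {a..a+h} (\<lambda>s. V s c)"
    "integral {a+h..a+2*h} integrand = integral {a+h..a+2*h} (\<lambda>s. V s c)"
    using assms by (auto intro!: integral_unique integrand_has_integral_if_H_const)
  then have "norm (integral {a..a+h} integrand - integral {a+h..a+2*h} integrand) \<le> LV * norm c * h * h"
    using norm_second_difference_V_apply_le[OF assms(1,2) less_imp_le[OF assms(3)]] by simp
  also have "\<dots> \<le> LV * BH * h * h"
    using H_bounded[of a] H_const[of a] LV_nonneg assms(3)
    by (intro mult_right_mono mult_left_mono) auto
  finally show ?thesis .
qed

lemma norm_integral_integrand_alternating_le:
  assumes "0 \<le> a" "a + 2*h \<le> 1" "0 \<le> h"
    and "\<And>s. a \<le> s \<Longrightarrow> s < a + h \<Longrightarrow> H s = c"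
    and "\<And>s. a + h \<le> s \<Longrightarrow> s < a + 2*h \<Longrightarrow> H s = - c"
  shows "norm (integral {a..a+2*h} integrand) \<le> LV * norm c * h * h"
proof -
  have "integral {a..a+h} integrand = integral {a..a+h} (\<lambda>s. V s c)"
    "integral {a+h..a+2*h} integrand = - integral {a+h..a+2*h} (\<lambda>s. V s c)"
    using assms integrand_has_integral_if_H_const[of "a+h" "a+2*h" "- c"]
    by (auto intro!: integral_unique integrand_has_integral_if_H_const
        simp: blinfun.minus_right integral_neg)
  moreover have "integral {a..a+2*h} integrand = integral {a..a+h} integrand + integral {a+h..a+2*h} integrand"
    using assms by (intro integral_integrand_combine[symmetric]) auto
  ultimately show ?thesis
    using norm_second_difference_V_apply_le[OF assms(1-3)] by simp
qed

end

lemma inverse_power_square: "(1 / 2^(n+1)) * (1 / 2^(n+1)) = (1::real) / 2^(2*n+2)"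
proof -
  have "(2::real)^(2*n+2) = 2^(n+1) * 2^(n+1)" by (simp flip: power_add)
  then show ?thesis by simp
qed

definition alternating_halves :: "(real \<Rightarrow> 'a::real_normed_vector) \<Rightarrow> nat \<Rightarrow> real \<Rightarrow> bool" where
  "alternating_halves H q K \<longleftrightarrow> (\<forall>k\<in>{1..2^q}. \<exists>c. norm c \<le> K \<and>
     (\<forall>s. tL q k \<le> s \<and> s < tM q k \<longrightarrow> H s = c) \<and> (\<forall>s. tM q k \<le> s \<and> s < tR q k \<longrightarrow> H s = - c))"

context dyadic_integrand
begin

lemma norm_integral_integrand_alternating_sum_le:
  assumes "alternating_halves H q K" "j \<le> l" "l \<le> 2^q"
  shows "norm (integral {real j / 2^q .. real l / 2^q} integrand) \<le> real (l - j) * (LV * K / 2^(2*q+2))"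
  using assms(2,3)
proof (induction l)
  case (Suc l)
  show ?case
  proof (cases "j = Suc l")
    case False
    then have "j \<le> l" using Suc.prems by simp
    define a :: real where "a = real l / 2^q"
    define h :: real where "h = 1 / 2^(q+1)"
    have Suc_l_le: "real (Suc l) \<le> 2^q" using Suc.prems by (metis of_nat_le_iff of_nat_numeral of_nat_power)
    then have a_le: "a + 2*h \<le> 1" by (simp add: a_def h_def field_simps)
    have points: "tL q (Suc l) = a" "tM q (Suc l) = a + h" "tR q (Suc l) = a + 2*h"
      "real (Suc l) / 2^q = a + 2*h"
      by (simp_all add: tL_def tM_def tR_def a_def h_def field_simps)
    have "Suc l \<in> {1..2^q}" using Suc.prems by simp
    then obtain c where c: "norm c \<le> K" "\<forall>s. tL q (Suc l) \<le> s \<and> s < tM q (Suc l) \<longrightarrow> H s = c"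
      "\<forall>s. tM q (Suc l) \<le> s \<and> s < tR q (Suc l) \<longrightarrow> H s = - c"
      using assms(1) unfolding alternating_halves_def by blast
    have "norm (integral {a..a + 2*h} integrand) \<le> LV * norm c * h * h"
    proof (rule norm_integral_integrand_alternating_le)
      show "H s = c" if "a \<le> s" "s < a + h" for s using c(2) that by (simp add: points)
      show "H s = - c" if "a + h \<le> s" "s < a + 2*h" for s using c(3) that by (simp add: points)
    qed (use a_le in \<open>simp_all add: a_def h_def\<close>)
    also have "\<dots> \<le> LV * K * (h * h)"
      using c(1) LV_nonneg by (simp add: mult.assoc mult_left_mono mult_right_mono)
    also have "\<dots> = LV * K / 2^(2*q+2)"
      using inverse_power_square[of q] by (simp add: h_def)
    finally have last_cell: "norm (integral {a..real (Suc l) / 2^q} integrand) \<le> LV * K / 2^(2*q+2)"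
      unfolding points(4) .
    have "integral {real j / 2^q .. real (Suc l) / 2^q} integrand =
        integral {real j / 2^q .. a} integrand + integral {a .. real (Suc l) / 2^q} integrand"
      using \<open>j \<le> l\<close> Suc_l_le
      by (intro integral_integrand_combine[symmetric]) (simp_all add: points a_def h_def divide_right_mono)
    then have "norm (integral {real j / 2^q .. real (Suc l) / 2^q} integrand) \<le>
        norm (integral {real j / 2^q .. a} integrand) + norm (integral {a .. real (Suc l) / 2^q} integrand)"
      by (simp add: norm_triangle_ineq)
    also have "\<dots> \<le> real (l - j) * (LV * K / 2^(2*q+2)) + LV * K / 2^(2*q+2)"
      using Suc.IH[OF \<open>j \<le> l\<close>] Suc.prems last_cell unfolding a_def by simp
    also have "\<dots> = real (Suc l - j) * (LV * K / 2^(2*q+2))"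
      by (simp only: Suc_diff_le[OF \<open>j \<le> l\<close>] of_nat_Suc distrib_right mult_1 add.commute)
    finally show ?thesis .
  qed simp
qed simp

lemma scoeff_primitive:
  assumes "m \<in> {1..2^n}"
  shows "scoeff primitive n m = integral {tL n m..tM n m} integrand - integral {tM n m..tR n m} integrand"
proof -
  note points = dyadic_points_in_unit_interval[OF assms]
  have "primitive (tM n m) = primitive (tL n m) + integral {tL n m..tM n m} integrand"
    "primitive (tR n m) = primitive (tM n m) + integral {tM n m..tR n m} integrand"
    unfolding primitive_def using points by (auto intro!: integral_integrand_combine[symmetric])
  then show ?thesis using assms by (simp add: scoeff_def algebra_simps scaleR_2)
qed

lemma scoeff_primitive_level_0: "scoeff primitive 0 0 = integral {0..1} integrand"
  by (simp add: scoeff_def primitive_def)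

lemma norm_scoeff_primitive_le:
  assumes "m \<in> {0..2^n}"
  shows "norm (scoeff primitive n m) \<le> BV * BH / 2^n"
proof (cases "m = 0")
  case True
  then show ?thesis
    using norm_integral_integrand_le[of 0 1] BV_nonneg BH_nonneg
    by (cases "n = 0") (simp_all add: scoeff_primitive_level_0 scoeff_index_0)
next
  case False
  then have m: "m \<in> {1..2^n}" using assms by auto
  note points = dyadic_points_in_unit_interval[OF m]
  have "norm (scoeff primitive n m) \<le> norm (integral {tL n m..tM n m} integrand) + norm (integral {tM n m..tR n m} integrand)"
    unfolding scoeff_primitive[OF m] by (rule norm_triangle_ineq4)
  also have "\<dots> \<le> BV * BH * (tM n m - tL n m) + BV * BH * (tR n m - tM n m)"
    using points by (intro add_mono norm_integral_integrand_le) auto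
  also have "\<dots> = BV * BH / 2^n"
    by (simp add: tM_minus_tL tR_minus_tM field_simps flip: distrib_left)
  finally show ?thesis .
qed

lemma norm_scoeff_primitive_le_fine:
  assumes "q < n" "m \<in> {1..2^n}"
  shows "norm (scoeff primitive n m) \<le> LV * BH / 2^(2*n+2)"
proof -
  obtain j :: nat where cell: "real j / 2^(q+1) \<le> tL n m" "tR n m \<le> (real j + 1) / 2^(q+1)"
    using dyadic_interval_within_cell[OF assms] .
  define h :: real where "h = 1 / 2^(n+1)"
  have h_pos: "0 < h" by (simp add: h_def)
  have points: "tM n m = tL n m + h" "tR n m = tL n m + 2*h"
    using tM_minus_tL[of n m] tR_minus_tM[of n m] by (simp_all add: h_def)
  have h_sq: "h * h = 1 / 2^(2*n+2)"
    unfolding h_def by (rule inverse_power_square)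
  note in_unit = dyadic_points_in_unit_interval[OF assms(2)]
  have "norm (integral {tL n m..tL n m + h} integrand - integral {tL n m + h..tL n m + 2*h} integrand)
      \<le> LV * BH * h * h"
  proof (rule norm_second_difference_integrand_le[OF _ _ h_pos])
    show "H s = H (real j / 2^(q+1))" if "tL n m \<le> s" "s < tL n m + 2*h" for s
      using that cell points by (intro H_eq_on_cell) auto
  qed (use in_unit points in auto)
  then show ?thesis
    unfolding scoeff_primitive[OF assms(2)] points using h_sq by (simp add: mult.assoc)
qed

lemma norm_scoeff_primitive_le_coarse:
  assumes "alternating_halves H q K" "n < q" "m \<in> {0..2^n}"
  shows "norm (scoeff primitive n m) \<le> 2^(q-n) * (LV * K / 2^(2*q+2))"
proof -
  define X where "X = LV * K / 2^(2*q+2)"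
  have X_nonneg: "0 \<le> X"
    using norm_integral_integrand_alternating_sum_le[OF assms(1), of 0 1] unfolding X_def
    by (simp add: order_trans[OF norm_ge_zero])
  have "norm (scoeff primitive n m) \<le> 2^(q-n) * X"
  proof (cases "m = 0")
    case True
    show ?thesis
    proof (cases "n = 0")
      case True
      then show ?thesis
        using \<open>m = 0\<close> norm_integral_integrand_alternating_sum_le[OF assms(1), of 0 "2^q"]
        by (simp add: scoeff_primitive_level_0 X_def)
    qed (use \<open>m = 0\<close> X_nonneg in \<open>simp add: scoeff_index_0\<close>)
  next
    case False
    then have m: "m \<in> {1..2^n}" using assms(3) by auto
    then obtain m' where m': "m = Suc m'" by (cases m) auto
    define d where "d = q - n - 1"
    have q_eq: "q = n + 1 + d" using assms(2) by (simp add: d_def)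
    define j0 j1 j2 :: nat where "j0 = m' * 2^(d+1)" and "j1 = (2*m' + 1) * 2^d" and "j2 = m * 2^(d+1)"
    have widths: "j1 = j0 + 2^d" "j2 = j1 + 2^d"
      by (simp_all add: j0_def j1_def j2_def m' algebra_simps)
    have "j2 \<le> 2^n * 2^(d+1)" using m by (simp add: j2_def)
    then have j2_le: "j2 \<le> 2^q" by (simp add: q_eq power_add)
    have points: "tL n m = real j0 / 2^q" "tM n m = real j1 / 2^q" "tR n m = real j2 / 2^q"
      by (simp_all add: tL_def tM_def tR_def j0_def j1_def j2_def m' q_eq power_add field_simps)
    have "norm (integral {tL n m..tM n m} integrand) \<le> real (j1 - j0) * X"
      unfolding points X_def using widths j2_le
      by (intro norm_integral_integrand_alternating_sum_le[OF assms(1)]) simp_all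
    then have left: "norm (integral {tL n m..tM n m} integrand) \<le> 2^d * X"
      using widths by simp
    have "norm (integral {tM n m..tR n m} integrand) \<le> real (j2 - j1) * X"
      unfolding points X_def using widths j2_le
      by (intro norm_integral_integrand_alternating_sum_le[OF assms(1)]) simp_all
    then have right: "norm (integral {tM n m..tR n m} integrand) \<le> 2^d * X"
      using widths by simp
    have "norm (scoeff primitive n m) \<le> norm (integral {tL n m..tM n m} integrand) + norm (integral {tM n m..tR n m} integrand)"
      unfolding scoeff_primitive[OF m] by (rule norm_triangle_ineq4)
    also have "\<dots> \<le> 2^d * X + 2^d * X"
      using left right by (rule add_mono)
    also have "\<dots> = 2^(q-n) * X"
      using q_eq by simp
    finally show ?thesis .
  qed
  then show ?thesis unfolding X_def .
qed

end

lemma alternating_halves_haar_block: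
  assumes "1 \<le> q" "\<And>t. t \<in> {0..1} \<Longrightarrow> norm (sblock (int q) f t) \<le> B"
  shows "alternating_halves (haar_block q f) q (2^q * (2 * B))"
  unfolding alternating_halves_def
proof
  fix k :: nat assume k: "k \<in> {1..2^q}"
  show "\<exists>c. norm c \<le> 2^q * (2 * B) \<and>
      (\<forall>s. tL q k \<le> s \<and> s < tM q k \<longrightarrow> haar_block q f s = c) \<and>
      (\<forall>s. tM q k \<le> s \<and> s < tR q k \<longrightarrow> haar_block q f s = - c)"
    using haar_block_on_dyadic_interval[OF assms(1) k] norm_scoeff_le[OF assms(2,1) k]
    by (intro exI[of _ "2^q *\<^sub>R scoeff f q k"]) auto
qed

locale block_integral_pair =
  fixes p :: int and v :: "real \<Rightarrow> ('a::banach \<Rightarrow>\<^sub>L 'b::banach)"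
    and q :: nat and w :: "real \<Rightarrow> 'a"
  assumes p_ge: "p \<ge> -1"
begin

abbreviation "BV \<equiv> supnorm (sblock p v)"
abbreviation "BW \<equiv> supnorm (sblock (int q) w)"

lemma BW_bounds_sblock: "t \<in> {0..1} \<Longrightarrow> norm (sblock (int q) w t) \<le> BW"
  by (rule norm_sblock_le_supnorm) simp_all

sublocale dyadic_integrand "sblock p v" "haar_block q w" q "4 * 2 powr p * BV" BV "4 * 2^q * BW"
proof
  show "norm (sblock p v b - sblock p v a) \<le> 4 * 2 powr p * BV * (b - a)" if "0 \<le> a" "a \<le> b" for a b
    using norm_sblock_diff_le_supnorm[OF p_ge that] .
  show "0 \<le> 4 * 2 powr p * BV" using supnorm_sblock_nonneg[OF p_ge] by (intro mult_nonneg_nonneg) simp_all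
  show "norm (sblock p v t) \<le> BV" if "t \<in> {0..1}" for t
    using norm_sblock_le_supnorm[OF p_ge that] .
  show "norm (haar_block q w s) \<le> 4 * 2^q * BW" for s
    using norm_haar_block_le[OF BW_bounds_sblock] .
qed (rule haar_block_eq_if_same_cell)

lemma scoeff_block_integral_eq:
  "m \<in> {0..2^n} \<Longrightarrow> scoeff (block_integral p v (int q) w) n m = scoeff primitive n m"
  by (rule scoeff_cong) (simp_all add: block_integral_eq_integral_haar_block primitive_def integrand_def[abs_def])

lemma norm_scoeff_block_integral_le_crude:
  assumes "m \<in> {0..2^n}"
  shows "norm (scoeff (block_integral p v (int q) w) n m) \<le> 4 * 2 powr (real q - real n) * BV * BW"
proof -
  have "BV * (4 * 2^q * BW) / 2^n = 4 * 2 powr (real q - real n) * BV * BW"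
    by (simp add: powr_diff powr_realpow)
  then show ?thesis
    using norm_scoeff_primitive_le[OF assms] by (simp add: scoeff_block_integral_eq[OF assms])
qed

lemma norm_scoeff_block_integral_le_fine:
  assumes "m \<in> {0..2^n}" "q < n" "p < int n"
  shows "norm (scoeff (block_integral p v (int q) w) n m)
    \<le> 4 * 2 powr (real_of_int p + real q - 2 * real n) * BV * BW"
proof (cases "m = 0")
  case True
  then show ?thesis
    using assms(2) supnorm_sblock_nonneg[OF p_ge, of v] supnorm_sblock_nonneg[of "int q" w]
    by (simp add: scoeff_block_integral_eq[OF assms(1)] scoeff_index_0)
next
  case False
  then have m: "m \<in> {1..2^n}" using assms(1) by auto
  have "(4 * 2 powr p * BV) * (4 * 2^q * BW) / 2^(2*n+2)
      = 4 * 2 powr (real_of_int p + real q - 2 * real n) * BV * BW"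
    by (simp add: powr_diff powr_add powr_realpow power_add field_simps flip: powr_realpow)
  then show ?thesis
    using norm_scoeff_primitive_le_fine[OF assms(2) m] by (simp add: scoeff_block_integral_eq[OF assms(1)])
qed

lemma norm_scoeff_block_integral_le_coarse:
  assumes "m \<in> {0..2^n}" "n < q" "p < int q"
  shows "norm (scoeff (block_integral p v (int q) w) n m)
    \<le> 4 * 2 powr (real_of_int p - real n) * BV * BW"
proof -
  have "alternating_halves (haar_block q w) q (2^q * (2 * BW))"
    using assms(2) by (intro alternating_halves_haar_block BW_bounds_sblock) simp_all
  then have "norm (scoeff primitive n m)
      \<le> 2^(q-n) * ((4 * 2 powr p * BV) * (2^q * (2 * BW)) / 2^(2*q+2))"
    by (rule norm_scoeff_primitive_le_coarse[OF _ assms(2,1)])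
  also have "\<dots> = 2 * 2 powr (real_of_int p - real n) * BV * BW"
    using assms(2) by (simp add: powr_diff powr_add powr_realpow power_add power_diff mult_2_right field_simps)
  also have "\<dots> \<le> 4 * 2 powr (real_of_int p - real n) * BV * BW"
    using supnorm_sblock_nonneg[OF p_ge, of v] supnorm_sblock_nonneg[of "int q" w] by simp
  finally show ?thesis by (simp add: scoeff_block_integral_eq[OF assms(1)])
qed

lemma norm_scoeff_block_integral_le:
  assumes "m \<in> {0..2^n}"
  shows "norm (scoeff (block_integral p v (int q) w) n m) \<le>
    (if int n = int q \<and> int q > p then 4 * BV * BW
     else 4 * 2 powr (real_of_int (- max (int n) (max p (int q)) - int n + p + int q)) * BV * BW)"
proof -
  consider (fine) "q < n" "p < int n" | (coarse) "n < q" "p < int q"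
    | (crude) "max (int n) (int q) \<le> p" | (diagonal) "n = q" "p < int q"
    by linarith
  then show ?thesis
  proof cases
    case fine
    then show ?thesis
      using norm_scoeff_block_integral_le_fine[OF assms fine] by (simp add: algebra_simps)
  next
    case coarse
    then show ?thesis
      using norm_scoeff_block_integral_le_coarse[OF assms coarse] by (simp add: algebra_simps)
  next
    case crude
    then show ?thesis
      using norm_scoeff_block_integral_le_crude[OF assms] by (simp add: algebra_simps)
  next
    case diagonal
    then show ?thesis
      using norm_scoeff_block_integral_le_crude[OF assms] by simp
  qed
qed

end

lemma supnorm_sblock_block_integral_le:
  fixes v :: "real \<Rightarrow> ('a::banach \<Rightarrow>\<^sub>L 'b::banach)" and w :: "real \<Rightarrow> 'a"
  assumes "i \<ge> -1" "p \<ge> -1" "q \<ge> 0"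
  shows "supnorm (sblock i (block_integral p v q w)) \<le>
    (if i = q \<and> q > p then 8 * supnorm (sblock p v) * supnorm (sblock q w)
     else 8 * 2 powr (real_of_int (- max i (max p q) - i + p + q)) * supnorm (sblock p v) * supnorm (sblock q w))"
    (is "_ \<le> ?R")
proof -
  obtain n where q: "q = int n" using assms(3) by (metis nonneg_int_cases)
  interpret block_integral_pair p v n w using assms(2) by unfold_locales
  have R_nonneg: "0 \<le> ?R"
    using supnorm_sblock_nonneg[OF assms(2), of v] supnorm_sblock_nonneg[of q w] assms(3) by simp
  from assms(1) show ?thesis
  proof (cases rule: int_ge_minus_one_cases)
    case 1
    have "block_integral p v q w 0 = 0" by (simp add: block_integral_def)
    then have "supnorm (sblock i (block_integral p v q w)) \<le> 0"
      using 1 by (intro supnorm_least) (simp add: sblock_def)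
    then show ?thesis using R_nonneg by linarith
  next
    case (2 k)
    define B where "B = (if i = q \<and> q > p then 4 * BV * BW
      else 4 * 2 powr (real_of_int (- max i (max p q) - i + p + q)) * BV * BW)"
    have "norm (scoeff (block_integral p v q w) k m) \<le> B" if "m \<in> {0..2^k}" for m
      unfolding B_def 2 q by (rule norm_scoeff_block_integral_le[OF that])
    then have "supnorm (sblock (int k) (block_integral p v q w)) \<le> 2 * B"
      by (rule supnorm_sblock_le_scoeff)
    also have "2 * B = ?R"
      by (cases "i = q \<and> q > p") (auto simp: B_def q)
    finally show ?thesis by (simp only: 2)
  qed
qed

theorem mainTheorem5:
  "\<exists>C::real. \<forall>(i::int) (p::int) (q::int)
      (v :: real \<Rightarrow> ((real ^ 'd) \<Rightarrow>\<^sub>L (real ^ 'n))) (w :: real \<Rightarrow> real ^ 'd).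
     i \<ge> -1 \<and> p \<ge> -1 \<and> q \<ge> 0 \<and> continuous_on {0..1} v \<and> continuous_on {0..1} w \<longrightarrow>
     supnorm (sblock i (block_integral p v q w)) \<le>
       (if i = q \<and> q > p then C * supnorm (sblock p v) * supnorm (sblock q w)
        else C * 2 powr (real_of_int (- max i (max p q) - i + p + q))
               * supnorm (sblock p v) * supnorm (sblock q w))"
  using supnorm_sblock_block_integral_le by blast

end
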